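(* Let $q$ be a prime power, let $1\le k\le m$ be integers, and let $C\subseteq\mathbb{F}_{q^m}^k$ be an $\mathbb{F}_{q^m}$-linear code of dimension $1\le t\le k$ over $\mathbb{F}_{q^m}$. Fix an integer $1\le\mu\le k$. The following are equivalent: (1) $\Delta_\mu(C)>\Delta_{\mu-1}(C)$; (2) there exists $1\le r\le t$ with $m_r(C)=\mu$.
   Context: A subspace $V\subseteq\mathbb{F}_{q^m}^k$ is Frobenius-closed if $(v_1^q,\dots,v_k^q)\in V$ whenever $v\in V$; $\Lambda_q(k,m)$ is the set of Frobenius-closed $\mathbb{F}_{q^m}$-subspaces. For $0\le\mu\le k$, $\Delta_\mu(C):=\max\{\dim_{\mathbb{F}_{q^m}}(V\cap C): V\in\Lambda_q(k,m),\ \dim_{\mathbb{F}_{q^m}}(V)=\mu\}$. The $r$-th generalized rank weight is $m_r(C):=\min\{\dim_{\mathbb{F}_{q^m}}(V):V\in\Lambda_q(k,m),\ \dim_{\mathbb{F}_{q^m}}(V\cap C)\ge r\}$. *)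

theory Defs
  imports "HOL-Analysis.Analysis" "HOL-Computational_Algebra.Primes"
begin

text \<open>Vectors of F_{q^m}^k are modelled as elements of 'a ^ 'n with CARD('n) = k,
  'a a finite field with CARD('a) = q^m.\<close>

definition prime_power :: "nat \<Rightarrow> bool" where
  "prime_power q \<longleftrightarrow> (\<exists>p e. prime p \<and> e \<ge> 1 \<and> q = p ^ e)"

definition frob :: "nat \<Rightarrow> 'a::field ^ 'n \<Rightarrow> 'a ^ 'n" where
  "frob q v = (\<chi> i. (v $ i) ^ q)"

definition frobenius_closed :: "nat \<Rightarrow> ('a::field ^ 'n) set \<Rightarrow> bool" where
  "frobenius_closed q V \<longleftrightarrow> (\<forall>v\<in>V. frob q v \<in> V)"

definition Lambda_q :: "nat \<Rightarrow> ('a::field ^ 'n) set set" where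
  "Lambda_q q = {V. vec.subspace V \<and> frobenius_closed q V}"

definition Delta :: "nat \<Rightarrow> ('a::field ^ 'n) set \<Rightarrow> nat \<Rightarrow> nat" where
  "Delta q C \<mu> = Max {vec.dim (V \<inter> C) | V. V \<in> Lambda_q q \<and> vec.dim V = \<mu>}"

definition gen_rank_weight :: "nat \<Rightarrow> ('a::field ^ 'n) set \<Rightarrow> nat \<Rightarrow> nat" where
  "gen_rank_weight q C r = (LEAST d. \<exists>V. V \<in> Lambda_q q \<and> vec.dim V = d \<and> vec.dim (V \<inter> C) \<ge> r)"

end

theory Submission
  imports Defs
begin

text \<open>The function \<open>\<mu> \<mapsto> \<Delta>\<^sub>\<mu>(C)\<close> is nondecreasing on \<open>0..k\<close> and ends at \<open>\<Delta>\<^sub>k(C) = t\<close>: every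
  Frobenius-closed subspace \<open>V \<noteq> \<FF>\<^sup>k\<close> can be enlarged by a standard basis vector \<open>e\<^sub>i \<notin> V\<close>, and
  the enlarged space stays Frobenius-closed because Frobenius acts coordinatewise. Since
  \<open>\<Delta>\<^sub>\<mu>(C) \<ge> r\<close> exactly when some \<open>V \<in> \<Lambda>\<^sub>q(k,m)\<close> of dimension \<open>\<mu>\<close> meets \<open>C\<close> in dimension at least
  \<open>r\<close>, the weight \<open>m\<^sub>r(C)\<close> is the least \<open>\<mu>\<close> with \<open>\<Delta>\<^sub>\<mu>(C) \<ge> r\<close>. The values \<open>m\<^sub>1, \<dots>, m\<^sub>t\<close> are
  therefore precisely the places where the monotone function \<open>\<Delta>\<close> jumps.\<close>

lemma mono_on_jump_iff_Least:
  fixes f :: "nat \<Rightarrow> nat"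
  assumes mono: "mono_on {..n} f" and "1 \<le> \<mu>" "\<mu> \<le> n"
  shows "f (\<mu> - 1) < f \<mu> \<longleftrightarrow> (\<exists>r. 1 \<le> r \<and> r \<le> f n \<and> (LEAST d. d \<le> n \<and> r \<le> f d) = \<mu>)"
proof
  assume jump: "f (\<mu> - 1) < f \<mu>"
  have "(LEAST d. d \<le> n \<and> f \<mu> \<le> f d) = \<mu>"
  proof (rule Least_equality)
    show "\<mu> \<le> n \<and> f \<mu> \<le> f \<mu>" using assms by simp
  next
    fix d assume d: "d \<le> n \<and> f \<mu> \<le> f d"
    show "\<mu> \<le> d"
    proof (rule ccontr)
      assume "\<not> \<mu> \<le> d"
      then have "f d \<le> f (\<mu> - 1)" using mono_onD[OF mono] assms by simp
      with d jump show False by simp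
    qed
  qed
  moreover have "f \<mu> \<le> f n" using mono_onD[OF mono] assms by simp
  ultimately show "\<exists>r. 1 \<le> r \<and> r \<le> f n \<and> (LEAST d. d \<le> n \<and> r \<le> f d) = \<mu>"
    using jump by (intro exI[of _ "f \<mu>"]) auto
next
  assume "\<exists>r. 1 \<le> r \<and> r \<le> f n \<and> (LEAST d. d \<le> n \<and> r \<le> f d) = \<mu>"
  then obtain r where r: "r \<le> f n" and least: "(LEAST d. d \<le> n \<and> r \<le> f d) = \<mu>"
    by blast
  have "r \<le> f \<mu>"
    using LeastI[of "\<lambda>d. d \<le> n \<and> r \<le> f d" n] r least by simp
  moreover have "f (\<mu> - 1) < r"
    using not_less_Least[of "\<mu> - 1" "\<lambda>d. d \<le> n \<and> r \<le> f d"] least assms(2,3) by auto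
  ultimately show "f (\<mu> - 1) < f \<mu>" by simp
qed

lemma prime_power_pos: "prime_power q \<Longrightarrow> 0 < q"
  unfolding prime_power_def using prime_gt_0_nat by auto

text \<open>Positivity of \<open>q\<close> matters here: since \<open>0 ^ 0 = 1\<close>, \<open>frob 0\<close> sends the zero vector to the all-ones vector.\<close>

lemma zero_in_Lambda_q: "0 < q \<Longrightarrow> {0} \<in> Lambda_q q"
  by (auto simp: Lambda_q_def frobenius_closed_def frob_def vec.subspace_0 vec_eq_iff)

lemma UNIV_in_Lambda_q: "UNIV \<in> Lambda_q q"
  by (simp add: Lambda_q_def frobenius_closed_def vec.subspace_UNIV)

lemma Lambda_q_extend_Suc:
  fixes V :: "('a::field ^ 'n) set"
  assumes V: "V \<in> Lambda_q q" and dim: "vec.dim V < CARD('n)"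
  shows "\<exists>W\<in>Lambda_q q. V \<subseteq> W \<and> vec.dim W = vec.dim V + 1"
proof -
  have sV: "vec.subspace V" and fV: "\<forall>v\<in>V. frob q v \<in> V"
    using V by (auto simp: Lambda_q_def frobenius_closed_def)
  have spV: "vec.span V = V" using sV vec.span_eq_iff by blast
  obtain i where ai: "axis i (1::'a) \<notin> V"
  proof (rule ccontr)
    assume "\<not> thesis"
    with that have "axis i 1 \<in> V" for i by blast
    then have "(\<Sum>i\<in>UNIV. x $ i *s axis i 1) \<in> V" for x :: "'a ^ 'n"
      by (intro vec.subspace_sum[OF sV]) (simp add: vec.subspace_scale[OF sV])
    then have "V = UNIV" by (auto simp: basis_expansion)
    with dim vec_dim_card show False by (metis less_irrefl)
  qed
  define a where "a = axis i (1::'a)"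
  define W where "W = vec.span (insert a V)"
  have "a \<notin> vec.span V" unfolding spV a_def by (rule ai)
  then have "vec.dim W = vec.dim V + 1"
    unfolding W_def vec.dim_span vec.dim_insert by simp
  moreover have "frob q x \<in> W" if "x \<in> W" for x
  proof -
    obtain c where "x - c *s a \<in> V" using \<open>x \<in> W\<close> unfolding W_def vec.span_insert spV by blast
    then have v: "frob q (x - c *s a) \<in> V" using fV by blast
    \<comment> \<open>\<open>x\<close> and \<open>x - c e\<^sub>i\<close> differ only in coordinate \<open>i\<close>, hence so do their Frobenius images\<close>
    have "frob q x - ((x $ i) ^ q - ((x - c *s a) $ i) ^ q) *s a = frob q (x - c *s a)"
      by (auto simp: vec_eq_iff frob_def a_def axis_def)
    with v have "frob q x - ((x $ i) ^ q - ((x - c *s a) $ i) ^ q) *s a \<in> V" by simp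
    then show "frob q x \<in> W" unfolding W_def vec.span_insert spV by blast
  qed
  ultimately show ?thesis
    using vec.span_superset[of "insert a V"]
    unfolding Lambda_q_def frobenius_closed_def W_def by blast
qed

lemma Lambda_q_extend:
  fixes V :: "('a::field ^ 'n) set"
  assumes "V \<in> Lambda_q q" "vec.dim V \<le> d" "d \<le> CARD('n)"
  shows "\<exists>W\<in>Lambda_q q. V \<subseteq> W \<and> vec.dim W = d"
  using assms(2,3)
proof (induction d rule: dec_induct)
  case base
  then show ?case using assms(1) by blast
next
  case (step d)
  then obtain W where W: "W \<in> Lambda_q q" "V \<subseteq> W" "vec.dim W = d" by auto
  then obtain W' where "W' \<in> Lambda_q q" "W \<subseteq> W'" "vec.dim W' = Suc d"
    using Lambda_q_extend_Suc[OF W(1)] step.prems by auto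
  with W(2) show ?case by blast
qed

lemma Lambda_q_dim_exists:
  assumes "0 < q" "d \<le> CARD('n)"
  shows "\<exists>V::('a::field ^ 'n) set. V \<in> Lambda_q q \<and> vec.dim V = d"
  using Lambda_q_extend[OF zero_in_Lambda_q[OF assms(1)]] assms(2) by fastforce

lemma Delta_upper:
  fixes C :: "('a::field ^ 'n) set"
  assumes "V \<in> Lambda_q q"
  shows "vec.dim (V \<inter> C) \<le> Delta q C (vec.dim V)"
proof -
  have "{vec.dim (W \<inter> C) | W. W \<in> Lambda_q q \<and> vec.dim W = vec.dim V} \<subseteq> {..CARD('n)}"
    using dim_subset_UNIV_cart_gen by auto
  then show ?thesis
    unfolding Delta_def using assms by (intro Max_ge) (auto intro: finite_subset)
qed

lemma Delta_attained:
  fixes C :: "('a::field ^ 'n) set"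
  assumes "0 < q" "d \<le> CARD('n)"
  obtains V where "V \<in> Lambda_q q" "vec.dim V = d" "Delta q C d = vec.dim (V \<inter> C)"
proof -
  let ?S = "{vec.dim (W \<inter> C) | W. W \<in> Lambda_q q \<and> vec.dim W = d}"
  have "?S \<subseteq> {..CARD('n)}" using dim_subset_UNIV_cart_gen by auto
  moreover have "?S \<noteq> {}" using Lambda_q_dim_exists[OF assms, where 'a='a] by blast
  ultimately have "Max ?S \<in> ?S" by (intro Max_in) (auto intro: finite_subset)
  then show thesis using that unfolding Delta_def by auto
qed

lemma Delta_mono:
  fixes C :: "('a::field ^ 'n) set"
  assumes "0 < q"
  shows "mono_on {..CARD('n)} (Delta q C)"
proof (rule mono_onI)
  fix a b assume ab: "a \<in> {..CARD('n)}" "b \<in> {..CARD('n)}" "a \<le> b"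
  obtain V where V: "V \<in> Lambda_q q" "vec.dim V = a" "Delta q C a = vec.dim (V \<inter> C)"
    using Delta_attained[OF assms, of a C] ab by auto
  obtain W where W: "W \<in> Lambda_q q" "V \<subseteq> W" "vec.dim W = b"
    using Lambda_q_extend[OF V(1)] V(2) ab by auto
  have "vec.dim (V \<inter> C) \<le> vec.dim (W \<inter> C)" using W(2) by (intro vec.dim_subset) blast
  also have "\<dots> \<le> Delta q C b" using Delta_upper[OF W(1), of C] W(3) by simp
  finally show "Delta q C a \<le> Delta q C b" using V(3) by simp
qed

lemma Delta_top:
  fixes C :: "('a::field ^ 'n) set"
  assumes "0 < q"
  shows "Delta q C CARD('n) = vec.dim C"
proof (rule antisym)
  obtain V :: "('a ^ 'n) set" where "Delta q C CARD('n) = vec.dim (V \<inter> C)"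
    using Delta_attained[OF assms, of "CARD('n)" C] by auto
  then show "Delta q C CARD('n) \<le> vec.dim C" by (simp add: vec.dim_subset)
  show "vec.dim C \<le> Delta q C CARD('n)"
    using Delta_upper[where C=C, OF UNIV_in_Lambda_q[of q]] vec_dim_card[where 'a='a and 'n='n] by simp
qed

lemma gen_rank_weight_eq_Least_Delta:
  fixes C :: "('a::field ^ 'n) set"
  assumes "0 < q"
  shows "gen_rank_weight q C r = (LEAST d. d \<le> CARD('n) \<and> r \<le> Delta q C d)"
proof -
  have "(\<exists>V. V \<in> Lambda_q q \<and> vec.dim V = d \<and> r \<le> vec.dim (V \<inter> C))
        \<longleftrightarrow> d \<le> CARD('n) \<and> r \<le> Delta q C d" for d
  proof
    assume "\<exists>V. V \<in> Lambda_q q \<and> vec.dim V = d \<and> r \<le> vec.dim (V \<inter> C)"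
    then obtain V where V: "V \<in> Lambda_q q" "vec.dim V = d" "r \<le> vec.dim (V \<inter> C)"
      by blast
    then have "r \<le> Delta q C d" using Delta_upper[OF V(1), of C] by simp
    with V(2) show "d \<le> CARD('n) \<and> r \<le> Delta q C d"
      using dim_subset_UNIV_cart_gen[of V] by simp
  next
    assume d: "d \<le> CARD('n) \<and> r \<le> Delta q C d"
    then obtain V where "V \<in> Lambda_q q" "vec.dim V = d" "Delta q C d = vec.dim (V \<inter> C)"
      using Delta_attained[OF assms, of d C] by blast
    with d show "\<exists>V. V \<in> Lambda_q q \<and> vec.dim V = d \<and> r \<le> vec.dim (V \<inter> C)"
      by auto
  qed
  then show ?thesis unfolding gen_rank_weight_def by simp
qed

theorem theorem8p2:
  fixes C :: "('a::{finite,field} ^ 'n) set"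
    and q m k t \<mu> :: nat
  assumes "prime_power q"
    and "CARD('a) = q ^ m"
    and "1 \<le> k" and "k \<le> m"
    and "CARD('n) = k"
    and "vec.subspace C"
    and "vec.dim C = t"
    and "1 \<le> t" and "t \<le> k"
    and "1 \<le> \<mu>" and "\<mu> \<le> k"
  shows "Delta q C \<mu> > Delta q C (\<mu> - 1) \<longleftrightarrow>
         (\<exists>r. 1 \<le> r \<and> r \<le> t \<and> gen_rank_weight q C r = \<mu>)"
proof -
  have q: "0 < q" using prime_power_pos assms(1) .
  have "Delta q C k = t" using Delta_top[OF q, of C] assms(5,7) by simp
  then show ?thesis
    using mono_on_jump_iff_Least[OF Delta_mono[OF q, of C]] assms(5,10,11)
    by (simp add: gen_rank_weight_eq_Least_Delta[OF q])
qed

end
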